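(* For a finite-dimensional Lie algebra $L$ over a field $F$, the following are pairwise equivalent: 1. $L$ is primitive of type 1 or of type 3; 2. there is a minimal ideal $B$ of $L$ and a subalgebra $U$ of $L$ such that $U$ is a complement of $B$ in $L$ and $U$ is also a complement of $C_L(B)$ in $L$; 3. there is a minimal ideal $B$ of $L$ such that $L$ is isomorphic to the semidirect sum $B \ltimes L/C_L(B)$ (with $L/C_L(B)$ acting on $B$ via the induced adjoint action).
   Context: The core $U_L$ of a subalgebra $U$ is the largest ideal of $L$ contained in $U$; $L$ is primitive if it has a maximal subalgebra $U$ with $U_L = 0$. A primitive Lie algebra is of type 1 if it has a unique minimal ideal which is abelian; of type 2 if it has a unique minimal ideal which is non-abelian; of type 3 if it has precisely two distinct minimal ideals, each non-abelian. A subalgebra $U$ complements an ideal $A$ if $L = A + U$ and $A \cap U = 0$. $C_L(B) = \{x\in L : [x,B]=0\}$. *)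

theory Defs
  imports Main "HOL.Vector_Spaces"
begin

text \<open>A Lie algebra L over a field F is modelled as the whole type 'a (an abelian group)
 with a scalar multiplication scale by the field type 'f and a bracket br.\<close>

definition lie_algebra :: "('f::field \<Rightarrow> 'a::ab_group_add \<Rightarrow> 'a) \<Rightarrow> ('a \<Rightarrow> 'a \<Rightarrow> 'a) \<Rightarrow> bool" where
  "lie_algebra scale br \<longleftrightarrow> vector_space scale \<and>
     (\<forall>x y z. br (x + y) z = br x z + br y z) \<and>
     (\<forall>x y z. br x (y + z) = br x y + br x z) \<and>
     (\<forall>a x y. br (scale a x) y = scale a (br x y)) \<and>
     (\<forall>a x y. br x (scale a y) = scale a (br x y)) \<and>
     (\<forall>x. br x x = 0) \<and>
     (\<forall>x y z. br x (br y z) + br y (br z x) + br z (br x y) = 0)"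

definition fin_dim :: "('f::field \<Rightarrow> 'a::ab_group_add \<Rightarrow> 'a) \<Rightarrow> bool" where
  "fin_dim scale \<longleftrightarrow> (\<exists>S. finite S \<and> module.span scale S = UNIV)"

definition lie_subalgebra :: "('f::field \<Rightarrow> 'a::ab_group_add \<Rightarrow> 'a) \<Rightarrow> ('a \<Rightarrow> 'a \<Rightarrow> 'a) \<Rightarrow> 'a set \<Rightarrow> bool" where
  "lie_subalgebra scale br U \<longleftrightarrow> module.subspace scale U \<and> (\<forall>x\<in>U. \<forall>y\<in>U. br x y \<in> U)"

definition lie_ideal :: "('f::field \<Rightarrow> 'a::ab_group_add \<Rightarrow> 'a) \<Rightarrow> ('a \<Rightarrow> 'a \<Rightarrow> 'a) \<Rightarrow> 'a set \<Rightarrow> bool" where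
  "lie_ideal scale br I \<longleftrightarrow> module.subspace scale I \<and> (\<forall>x. \<forall>y\<in>I. br x y \<in> I)"

definition maximal_subalgebra :: "('f::field \<Rightarrow> 'a::ab_group_add \<Rightarrow> 'a) \<Rightarrow> ('a \<Rightarrow> 'a \<Rightarrow> 'a) \<Rightarrow> 'a set \<Rightarrow> bool" where
  "maximal_subalgebra scale br U \<longleftrightarrow> lie_subalgebra scale br U \<and> U \<noteq> UNIV \<and>
     (\<forall>V. lie_subalgebra scale br V \<and> U \<subseteq> V \<longrightarrow> V = U \<or> V = UNIV)"

definition core :: "('f::field \<Rightarrow> 'a::ab_group_add \<Rightarrow> 'a) \<Rightarrow> ('a \<Rightarrow> 'a \<Rightarrow> 'a) \<Rightarrow> 'a set \<Rightarrow> 'a set" where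
  "core scale br U = module.span scale (\<Union>{I. lie_ideal scale br I \<and> I \<subseteq> U})"

definition primitive :: "('f::field \<Rightarrow> 'a::ab_group_add \<Rightarrow> 'a) \<Rightarrow> ('a \<Rightarrow> 'a \<Rightarrow> 'a) \<Rightarrow> bool" where
  "primitive scale br \<longleftrightarrow> (\<exists>U. maximal_subalgebra scale br U \<and> core scale br U = {0})"

definition minimal_ideal :: "('f::field \<Rightarrow> 'a::ab_group_add \<Rightarrow> 'a) \<Rightarrow> ('a \<Rightarrow> 'a \<Rightarrow> 'a) \<Rightarrow> 'a set \<Rightarrow> bool" where
  "minimal_ideal scale br I \<longleftrightarrow> lie_ideal scale br I \<and> I \<noteq> {0} \<and>
     (\<forall>J. lie_ideal scale br J \<and> J \<subseteq> I \<longrightarrow> J = {0} \<or> J = I)"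

definition abelian :: "('a::ab_group_add \<Rightarrow> 'a \<Rightarrow> 'a) \<Rightarrow> 'a set \<Rightarrow> bool" where
  "abelian br I \<longleftrightarrow> (\<forall>x\<in>I. \<forall>y\<in>I. br x y = 0)"

definition primitive_type1 :: "('f::field \<Rightarrow> 'a::ab_group_add \<Rightarrow> 'a) \<Rightarrow> ('a \<Rightarrow> 'a \<Rightarrow> 'a) \<Rightarrow> bool" where
  "primitive_type1 scale br \<longleftrightarrow> primitive scale br \<and>
     (\<exists>!B. minimal_ideal scale br B) \<and> (\<forall>B. minimal_ideal scale br B \<longrightarrow> abelian br B)"

definition primitive_type2 :: "('f::field \<Rightarrow> 'a::ab_group_add \<Rightarrow> 'a) \<Rightarrow> ('a \<Rightarrow> 'a \<Rightarrow> 'a) \<Rightarrow> bool" where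
  "primitive_type2 scale br \<longleftrightarrow> primitive scale br \<and>
     (\<exists>!B. minimal_ideal scale br B) \<and> (\<forall>B. minimal_ideal scale br B \<longrightarrow> \<not> abelian br B)"

definition primitive_type3 :: "('f::field \<Rightarrow> 'a::ab_group_add \<Rightarrow> 'a) \<Rightarrow> ('a \<Rightarrow> 'a \<Rightarrow> 'a) \<Rightarrow> bool" where
  "primitive_type3 scale br \<longleftrightarrow> primitive scale br \<and>
     (\<exists>B1 B2. B1 \<noteq> B2 \<and> {B. minimal_ideal scale br B} = {B1, B2}) \<and>
     (\<forall>B. minimal_ideal scale br B \<longrightarrow> \<not> abelian br B)"

definition complements :: "'a::ab_group_add set \<Rightarrow> 'a set \<Rightarrow> bool" where
  "complements U A \<longleftrightarrow> (\<forall>x. \<exists>a\<in>A. \<exists>u\<in>U. x = a + u) \<and> A \<inter> U = {0}"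

definition centralizer :: "('a::ab_group_add \<Rightarrow> 'a \<Rightarrow> 'a) \<Rightarrow> 'a set \<Rightarrow> 'a set" where
  "centralizer br B = {x. \<forall>b\<in>B. br x b = 0}"

definition coset :: "'a::ab_group_add set \<Rightarrow> 'a \<Rightarrow> 'a set" where
  "coset C x = (\<lambda>c. x + c) ` C"

definition quot :: "'a::ab_group_add set \<Rightarrow> 'a set set" where
  "quot C = range (coset C)"

definition rep :: "'a set \<Rightarrow> 'a" where
  "rep X = (SOME x. x \<in> X)"

definition q_add :: "'a::ab_group_add set \<Rightarrow> 'a set \<Rightarrow> 'a set \<Rightarrow> 'a set" where
  "q_add C X Y = coset C (rep X + rep Y)"

definition q_scale :: "('f::field \<Rightarrow> 'a::ab_group_add \<Rightarrow> 'a) \<Rightarrow> 'a set \<Rightarrow> 'f \<Rightarrow> 'a set \<Rightarrow> 'a set" where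
  "q_scale scale C a X = coset C (scale a (rep X))"

definition q_br :: "('a::ab_group_add \<Rightarrow> 'a \<Rightarrow> 'a) \<Rightarrow> 'a set \<Rightarrow> 'a set \<Rightarrow> 'a set \<Rightarrow> 'a set" where
  "q_br br C X Y = coset C (br (rep X) (rep Y))"

text \<open>Semidirect sum B \<ltimes> L/C with L/C acting on B by the induced adjoint action
  X \<cdot> b = [x, b] for any representative x of X (well defined when C centralizes B).\<close>

definition sd_add :: "'a::ab_group_add set \<Rightarrow> 'a \<times> 'a set \<Rightarrow> 'a \<times> 'a set \<Rightarrow> 'a \<times> 'a set" where
  "sd_add C p q = (fst p + fst q, q_add C (snd p) (snd q))"

definition sd_scale :: "('f::field \<Rightarrow> 'a::ab_group_add \<Rightarrow> 'a) \<Rightarrow> 'a set \<Rightarrow> 'f \<Rightarrow> 'a \<times> 'a set \<Rightarrow> 'a \<times> 'a set" where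
  "sd_scale scale C a p = (scale a (fst p), q_scale scale C a (snd p))"

definition sd_br :: "('a::ab_group_add \<Rightarrow> 'a \<Rightarrow> 'a) \<Rightarrow> 'a set \<Rightarrow> 'a \<times> 'a set \<Rightarrow> 'a \<times> 'a set \<Rightarrow> 'a \<times> 'a set" where
  "sd_br br C p q =
     (br (fst p) (fst q) + br (rep (snd p)) (fst q) - br (rep (snd q)) (fst p),
      q_br br C (snd p) (snd q))"

definition iso_semidirect :: "('f::field \<Rightarrow> 'a::ab_group_add \<Rightarrow> 'a) \<Rightarrow> ('a \<Rightarrow> 'a \<Rightarrow> 'a) \<Rightarrow> 'a set \<Rightarrow> bool" where
  "iso_semidirect scale br B \<longleftrightarrow>
     (let C = centralizer br B in
      \<exists>f. bij_betw f UNIV (B \<times> quot C) \<and>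
        (\<forall>x y. f (x + y) = sd_add C (f x) (f y)) \<and>
        (\<forall>a x. f (scale a x) = sd_scale scale C a (f x)) \<and>
        (\<forall>x y. f (br x y) = sd_br br C (f x) (f y)))"

end

theory Submission
  imports Defs
begin

text \<open>
  Let B be a minimal ideal of L and C = C_L(B).
  If U is a core-free maximal subalgebra and A is a nonzero ideal centralizing B (B itself in
  type 1, the other minimal ideal in type 3), then maximality gives L = A + U = B + U, while
  B \<inter> U and C \<inter> U are ideals of L inside U, hence zero: U complements both B and C.
  Conversely, a common complement U is a core-free maximal subalgebra, and projecting ideals
  inside C to B along U shows that C is a minimal ideal too; the minimal ideals are then
  B = C (type 1) or B and C (type 3).
  A common complement U yields the isomorphism x \<mapsto> (B-component of x, x + C) onto
  B \<ltimes> L/C, and the preimages of B \<ltimes> 0 and 0 \<ltimes> L/C under any such isomorphism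
  are again a minimal ideal and a common complement of it and its centralizer.
\<close>

section \<open>Ideals, centralizers and minimal ideals\<close>

locale lie_alg = vector_space scale for scale :: "'f::field \<Rightarrow> 'a::ab_group_add \<Rightarrow> 'a" +
  fixes br :: "'a \<Rightarrow> 'a \<Rightarrow> 'a"
  assumes br_add_left: "br (x + y) z = br x z + br y z"
    and br_add_right: "br x (y + z) = br x y + br x z"
    and br_scale_left: "br (scale a x) y = scale a (br x y)"
    and br_scale_right: "br x (scale a y) = scale a (br x y)"
    and br_self: "br x x = 0"
    and jacobi: "br x (br y z) + br y (br z x) + br z (br x y) = 0"

lemma lie_alg_if_lie_algebra: "lie_algebra scale br \<Longrightarrow> lie_alg scale br"
  unfolding lie_algebra_def lie_alg_def lie_alg_axioms_def by auto

context lie_alg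
begin

lemma br_zero_left [simp]: "br 0 x = 0"
  using br_add_left[of 0 0 x] by simp

lemma br_zero_right [simp]: "br x 0 = 0"
  using br_add_right[of x 0 0] by simp

lemma br_anticomm: "br x y = - br y x"
proof -
  have "br x x + br y x + (br x y + br y y) = 0"
    using br_self[of "x + y"] by (simp add: br_add_left br_add_right)
  then show ?thesis
    by (simp add: br_self eq_neg_iff_add_eq_0 add.commute)
qed

lemma br_eq_zero_commute: "br x y = 0 \<longleftrightarrow> br y x = 0"
  by (metis br_anticomm neg_equal_0_iff_equal)

lemma br_diff_left: "br (x - y) z = br x z - br y z"
  by (metis br_add_left diff_add_cancel eq_diff_eq)

lemma br_diff_right: "br x (y - z) = br x y - br x z"
  by (metis br_add_right diff_add_cancel eq_diff_eq)

lemma lie_subalgebra_subspace: "lie_subalgebra scale br U \<Longrightarrow> subspace U"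
  unfolding lie_subalgebra_def by simp

lemma lie_subalgebra_br: "lie_subalgebra scale br U \<Longrightarrow> x \<in> U \<Longrightarrow> y \<in> U \<Longrightarrow> br x y \<in> U"
  unfolding lie_subalgebra_def by simp

lemma lie_ideal_subspace: "lie_ideal scale br I \<Longrightarrow> subspace I"
  unfolding lie_ideal_def by simp

lemma lie_ideal_br_left: "lie_ideal scale br I \<Longrightarrow> y \<in> I \<Longrightarrow> br x y \<in> I"
  unfolding lie_ideal_def by simp

lemma lie_ideal_br_right: "lie_ideal scale br I \<Longrightarrow> x \<in> I \<Longrightarrow> br x y \<in> I"
  by (metis br_anticomm lie_ideal_br_left lie_ideal_subspace subspace_neg)

lemma lie_ideal_Int: "lie_ideal scale br I \<Longrightarrow> lie_ideal scale br J \<Longrightarrow> lie_ideal scale br (I \<inter> J)"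
  unfolding lie_ideal_def by (auto intro: subspace_inter)

lemma lie_ideal_if_stable:
  assumes "subspace W" and "\<forall>x. \<exists>p\<in>P. \<exists>q\<in>Q. x = p + q"
    and "\<And>p w. p \<in> P \<Longrightarrow> w \<in> W \<Longrightarrow> br p w \<in> W"
    and "\<And>q w. q \<in> Q \<Longrightarrow> w \<in> W \<Longrightarrow> br q w \<in> W"
  shows "lie_ideal scale br W"
  unfolding lie_ideal_def
proof (intro conjI allI ballI)
  fix x w assume "w \<in> W"
  moreover obtain p q where "p \<in> P" "q \<in> Q" "x = p + q"
    using assms(2) by blast
  ultimately show "br x w \<in> W"
    using assms(1,3,4) by (simp add: br_add_left subspace_add)
qed (fact assms(1))

lemma lie_ideal_Int_subalgebra:
  assumes I: "lie_ideal scale br I" and U: "lie_subalgebra scale br U"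
    and sum: "\<forall>x. \<exists>p\<in>P. \<exists>u\<in>U. x = p + u"
    and P: "\<And>p w. p \<in> P \<Longrightarrow> w \<in> I \<Longrightarrow> br p w = 0"
  shows "lie_ideal scale br (I \<inter> U)"
proof (rule lie_ideal_if_stable[OF _ sum])
  have "subspace I" "subspace U"
    using I U lie_ideal_subspace lie_subalgebra_subspace by blast+
  then show "subspace (I \<inter> U)"
    by (rule subspace_inter)
  show "br p w \<in> I \<inter> U" if "p \<in> P" "w \<in> I \<inter> U" for p w
    using that P[of p w] subspace_0[OF \<open>subspace I\<close>] subspace_0[OF \<open>subspace U\<close>] by simp
  show "br u w \<in> I \<inter> U" if "u \<in> U" "w \<in> I \<inter> U" for u w
    using that lie_subalgebra_br[OF U] lie_ideal_br_left[OF I] by blast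
qed

lemma centralizer_br_left: "c \<in> centralizer br B \<Longrightarrow> b \<in> B \<Longrightarrow> br c b = 0"
  unfolding centralizer_def by simp

lemma centralizer_br_right: "c \<in> centralizer br B \<Longrightarrow> b \<in> B \<Longrightarrow> br b c = 0"
  using br_eq_zero_commute centralizer_br_left by blast

lemma subspace_centralizer: "subspace (centralizer br B)"
  unfolding subspace_def centralizer_def by (simp add: br_add_left br_scale_left)

lemma lie_ideal_centralizer:
  assumes "lie_ideal scale br B"
  shows "lie_ideal scale br (centralizer br B)"
  unfolding lie_ideal_def
proof (intro conjI allI ballI)
  fix x y assume y: "y \<in> centralizer br B"
  show "br x y \<in> centralizer br B"
    unfolding centralizer_def
  proof (intro CollectI ballI)
    fix b assume b: "b \<in> B"
    have "br y (br b x) = 0" "br y b = 0"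
      using y b lie_ideal_br_right[OF assms b] by (simp_all add: centralizer_br_left)
    then have "br b (br x y) = 0"
      using jacobi[of x y b] by simp
    then show "br (br x y) b = 0"
      by (simp add: br_eq_zero_commute)
  qed
qed (fact subspace_centralizer)

lemma abelian_iff_subset_centralizer: "abelian br B \<longleftrightarrow> B \<subseteq> centralizer br B"
  unfolding abelian_def centralizer_def by blast

lemma minimal_ideal_lie_ideal: "minimal_ideal scale br B \<Longrightarrow> lie_ideal scale br B"
  unfolding minimal_ideal_def by simp

lemma minimal_ideal_nonzero:
  assumes "minimal_ideal scale br B"
  obtains b where "b \<in> B" "b \<noteq> 0"
  using assms subspace_0[OF lie_ideal_subspace[OF minimal_ideal_lie_ideal[OF assms]]]
  unfolding minimal_ideal_def by blast

lemma minimal_ideal_eq_if_subset: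
  "minimal_ideal scale br B \<Longrightarrow> lie_ideal scale br J \<Longrightarrow> J \<subseteq> B \<Longrightarrow> J \<noteq> {0} \<Longrightarrow> J = B"
  unfolding minimal_ideal_def by blast

lemma minimal_ideals_Int:
  assumes B: "minimal_ideal scale br B" and B': "minimal_ideal scale br B'" and "B \<noteq> B'"
  shows "B \<inter> B' = {0}"
proof (rule ccontr)
  assume "B \<inter> B' \<noteq> {0}"
  moreover have "lie_ideal scale br (B \<inter> B')"
    using B B' lie_ideal_Int minimal_ideal_lie_ideal by blast
  ultimately have "B \<inter> B' = B" "B \<inter> B' = B'"
    using minimal_ideal_eq_if_subset[OF B] minimal_ideal_eq_if_subset[OF B'] by blast+
  then show False
    using \<open>B \<noteq> B'\<close> by simp
qed

lemma minimal_ideal_subset_centralizer: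
  assumes B: "minimal_ideal scale br B" and B': "minimal_ideal scale br B'" and "B \<noteq> B'"
  shows "B' \<subseteq> centralizer br B"
  unfolding centralizer_def
proof (intro subsetI CollectI ballI)
  fix y b assume "y \<in> B'" "b \<in> B"
  then have "br y b \<in> B \<inter> B'"
    using B B' lie_ideal_br_left lie_ideal_br_right minimal_ideal_lie_ideal by blast
  then show "br y b = 0"
    using minimal_ideals_Int[OF assms] by blast
qed

lemma core_eq_zero_iff:
  "core scale br U = {0} \<longleftrightarrow> (\<forall>I. lie_ideal scale br I \<and> I \<subseteq> U \<longrightarrow> I = {0})"
proof
  assume core: "core scale br U = {0}"
  show "\<forall>I. lie_ideal scale br I \<and> I \<subseteq> U \<longrightarrow> I = {0}"
  proof (intro allI impI)
    fix I assume I: "lie_ideal scale br I \<and> I \<subseteq> U"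
    then have "I \<subseteq> core scale br U"
      unfolding core_def by (blast intro: span_superset[THEN subsetD])
    then show "I = {0}"
      using core subspace_0[OF lie_ideal_subspace] I by blast
  qed
next
  assume "\<forall>I. lie_ideal scale br I \<and> I \<subseteq> U \<longrightarrow> I = {0}"
  then have "core scale br U \<subseteq> {0}"
    unfolding core_def by (intro span_minimal) auto
  then show "core scale br U = {0}"
    unfolding core_def using span_zero by blast
qed

lemma maximal_subalgebra_sum_ideal:
  assumes U: "maximal_subalgebra scale br U" and I: "lie_ideal scale br I" and "\<not> I \<subseteq> U"
  shows "\<forall>x. \<exists>i\<in>I. \<exists>u\<in>U. x = i + u"
proof -
  define V where "V = {i + u |i u. i \<in> I \<and> u \<in> U}"
  have subalg: "lie_subalgebra scale br U"
    using U unfolding maximal_subalgebra_def by simp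
  have "lie_subalgebra scale br V"
    unfolding lie_subalgebra_def
  proof (intro conjI ballI)
    show "subspace V"
      unfolding V_def
      using subspace_sums lie_ideal_subspace[OF I] lie_subalgebra_subspace[OF subalg] by blast
    fix x y assume "x \<in> V" "y \<in> V"
    then obtain i u i' u' where iu: "i \<in> I" "u \<in> U" "i' \<in> I" "u' \<in> U"
      and xy: "x = i + u" "y = i' + u'"
      unfolding V_def by blast
    have "br x y = (br i y + br u i') + br u u'"
      unfolding xy by (simp add: br_add_left br_add_right add.assoc)
    moreover have "br i y + br u i' \<in> I"
      using iu lie_ideal_br_left[OF I] lie_ideal_br_right[OF I]
        subspace_add[OF lie_ideal_subspace[OF I]] by blast
    moreover have "br u u' \<in> U"
      using iu lie_subalgebra_br[OF subalg] by blast
    ultimately show "br x y \<in> V"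
      unfolding V_def by blast
  qed
  moreover have "U \<subseteq> V" "I \<subseteq> V"
    unfolding V_def
    using subspace_0[OF lie_ideal_subspace[OF I]] subspace_0[OF lie_subalgebra_subspace[OF subalg]]
    by force+
  ultimately have "V = UNIV"
    using U \<open>\<not> I \<subseteq> U\<close> unfolding maximal_subalgebra_def by blast
  then show ?thesis
    unfolding V_def by blast
qed

end

section \<open>Cosets and the semidirect sum\<close>

context vector_space
begin

lemma subspace_mem_if_diff_mem: "subspace S \<Longrightarrow> a - b \<in> S \<Longrightarrow> b \<in> S \<Longrightarrow> a \<in> S"
  by (metis diff_add_cancel subspace_add)

lemma mem_coset_iff: "subspace C \<Longrightarrow> z \<in> coset C x \<longleftrightarrow> z - x \<in> C"
  unfolding coset_def by (auto simp: image_iff) (metis add_diff_cancel_left' diff_add_cancel)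

lemma coset_eq_iff:
  assumes "subspace C"
  shows "coset C x = coset C y \<longleftrightarrow> x - y \<in> C"
proof
  assume "coset C x = coset C y"
  moreover have "x \<in> coset C x"
    using assms by (simp add: mem_coset_iff subspace_0)
  ultimately show "x - y \<in> C"
    using assms by (simp add: mem_coset_iff)
next
  assume "x - y \<in> C"
  then have "y - x \<in> C"
    using subspace_neg[OF assms] by fastforce
  have "z - x \<in> C \<longleftrightarrow> z - y \<in> C" for z
    using subspace_add[OF assms] \<open>x - y \<in> C\<close> \<open>y - x \<in> C\<close>
    by (metis diff_add_cancel add_diff_eq diff_diff_eq2)
  then show "coset C x = coset C y"
    using assms by (auto simp: mem_coset_iff)
qed

lemma rep_coset_diff: "subspace C \<Longrightarrow> rep (coset C x) - x \<in> C"
  unfolding rep_def by (rule someI2[of _ x]) (simp_all add: mem_coset_iff subspace_0)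

lemma coset_rep_coset [simp]: "subspace C \<Longrightarrow> coset C (rep (coset C x)) = coset C x"
  by (simp add: coset_eq_iff rep_coset_diff)

lemma coset_rep: "subspace C \<Longrightarrow> X \<in> quot C \<Longrightarrow> coset C (rep X) = X"
  unfolding quot_def by auto

lemma q_add_coset:
  assumes "subspace C"
  shows "q_add C (coset C x) (coset C y) = coset C (x + y)"
proof -
  have "(rep (coset C x) + rep (coset C y)) - (x + y) = (rep (coset C x) - x) + (rep (coset C y) - y)"
    by (simp add: algebra_simps)
  also have "\<dots> \<in> C"
    using assms rep_coset_diff subspace_add by blast
  finally show ?thesis
    unfolding q_add_def using assms by (simp add: coset_eq_iff)
qed

lemma q_scale_coset: "subspace C \<Longrightarrow> q_scale scale C a (coset C x) = coset C (scale a x)"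
  unfolding q_scale_def coset_eq_iff
  by (metis rep_coset_diff scale_right_diff_distrib subspace_scale)

end

context lie_alg
begin

lemma q_br_coset:
  assumes "lie_ideal scale br C"
  shows "q_br br C (coset C x) (coset C y) = coset C (br x y)"
proof -
  let ?x = "rep (coset C x)" and ?y = "rep (coset C y)"
  have C: "subspace C"
    using assms by (rule lie_ideal_subspace)
  have "br ?x ?y - br x y = br (?x - x) ?y + br x (?y - y)"
    by (simp add: br_diff_left br_diff_right)
  also have "\<dots> \<in> C"
    using C assms rep_coset_diff lie_ideal_br_left lie_ideal_br_right subspace_add by metis
  finally show ?thesis
    unfolding q_br_def using C by (simp add: coset_eq_iff)
qed

lemma br_decompose: "br (b + u) (b' + v) = (br b b' + br u b' - br v b) + br u v"
  by (simp add: br_add_left br_add_right br_anticomm[of b v])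

lemma br_rep_coset_centralizer:
  assumes "b \<in> B"
  shows "br (rep (coset (centralizer br B) x)) b = br x b"
proof -
  have "br (rep (coset (centralizer br B) x) - x) b = 0"
    using assms centralizer_br_left rep_coset_diff subspace_centralizer by blast
  then show ?thesis
    by (simp add: br_diff_left)
qed

lemma sd_add_coset:
  "subspace C \<Longrightarrow> sd_add C (b, coset C x) (b', coset C y) = (b + b', coset C (x + y))"
  unfolding sd_add_def by (simp add: q_add_coset)

lemma sd_scale_coset:
  "subspace C \<Longrightarrow> sd_scale scale C a (b, coset C x) = (scale a b, coset C (scale a x))"
  unfolding sd_scale_def by (simp add: q_scale_coset)

lemma sd_br_coset:
  assumes "lie_ideal scale br B" and "b \<in> B" "b' \<in> B"
  shows "sd_br br (centralizer br B) (b, coset (centralizer br B) x) (b', coset (centralizer br B) y)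
    = (br b b' + br x b' - br y b, coset (centralizer br B) (br x y))"
  unfolding sd_br_def
  using assms lie_ideal_centralizer by (simp add: q_br_coset br_rep_coset_centralizer)

end

section \<open>Core-free maximal subalgebras\<close>

context lie_alg
begin

lemma complements_if_core_free:
  assumes U: "maximal_subalgebra scale br U" and core: "core scale br U = {0}"
    and B: "minimal_ideal scale br B"
    and A: "lie_ideal scale br A" "A \<noteq> {0}" "A \<subseteq> centralizer br B"
  shows "complements U B" and "complements U (centralizer br B)"
proof -
  let ?C = "centralizer br B"
  have subalg: "lie_subalgebra scale br U"
    using U unfolding maximal_subalgebra_def by simp
  have ideal_B: "lie_ideal scale br B" and ideal_C: "lie_ideal scale br ?C"
    using B lie_ideal_centralizer minimal_ideal_lie_ideal by blast+
  have no_ideal: "I = {0}" if "lie_ideal scale br I" "I \<subseteq> U" for I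
    using core that by (simp add: core_eq_zero_iff)
  have "B \<noteq> {0}"
    using B by (simp add: minimal_ideal_def)
  then have sum_B: "\<forall>x. \<exists>b\<in>B. \<exists>u\<in>U. x = b + u"
    using maximal_subalgebra_sum_ideal[OF U ideal_B] no_ideal[OF ideal_B] by blast
  have sum_A: "\<forall>x. \<exists>a\<in>A. \<exists>u\<in>U. x = a + u"
    using maximal_subalgebra_sum_ideal[OF U A(1)] no_ideal[OF A(1)] A(2) by blast
  have "lie_ideal scale br (B \<inter> U)"
    using A(3) centralizer_br_left by (intro lie_ideal_Int_subalgebra[OF ideal_B subalg sum_A]) blast
  then have "B \<inter> U = {0}"
    using no_ideal by blast
  with sum_B show "complements U B"
    unfolding complements_def by blast
  have "lie_ideal scale br (?C \<inter> U)"
    using centralizer_br_right by (intro lie_ideal_Int_subalgebra[OF ideal_C subalg sum_B])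
  then have "?C \<inter> U = {0}"
    using no_ideal by blast
  moreover have "\<forall>x. \<exists>c\<in>?C. \<exists>u\<in>U. x = c + u"
    using sum_A A(3) by blast
  ultimately show "complements U ?C"
    unfolding complements_def by blast
qed

end

locale lie_minimal_ideal = lie_alg +
  fixes B
  assumes minimal_B: "minimal_ideal scale br B"
begin

abbreviation C where "C \<equiv> centralizer br B"

lemma lie_ideal_B: "lie_ideal scale br B"
  using minimal_B by (rule minimal_ideal_lie_ideal)

lemma lie_ideal_C: "lie_ideal scale br C"
  using lie_ideal_B by (rule lie_ideal_centralizer)

lemma subspace_B: "subspace B" and subspace_C: "subspace C"
  using lie_ideal_B lie_ideal_C lie_ideal_subspace by blast+

end

locale common_complement = lie_minimal_ideal +
  fixes U
  assumes subalgebra_U: "lie_subalgebra scale br U"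
    and complements_B: "complements U B"
    and complements_C: "complements U (centralizer br B)"

context lie_alg
begin

lemma common_complement_iff:
  "common_complement scale br B U \<longleftrightarrow> minimal_ideal scale br B \<and> lie_subalgebra scale br U \<and>
     complements U B \<and> complements U (centralizer br B)"
  by (simp add: common_complement_def common_complement_axioms_def lie_minimal_ideal_def
      lie_minimal_ideal_axioms_def lie_alg_axioms)

lemma common_complement_if_primitive_type1_or_type3:
  assumes "primitive_type1 scale br \<or> primitive_type3 scale br"
  shows "\<exists>B U. common_complement scale br B U"
proof -
  have "primitive scale br"
    using assms unfolding primitive_type1_def primitive_type3_def by (elim disjE conjE)
  then obtain U where U: "maximal_subalgebra scale br U" "core scale br U = {0}"
    unfolding primitive_def by blast
  have subalg: "lie_subalgebra scale br U"
    using U unfolding maximal_subalgebra_def by simp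
  have "\<exists>B A. minimal_ideal scale br B \<and> minimal_ideal scale br A \<and> A \<subseteq> centralizer br B"
    using assms
  proof (elim disjE)
    assume "primitive_type1 scale br"
    then obtain B where "minimal_ideal scale br B" "abelian br B"
      unfolding primitive_type1_def by (metis (no_types) ex1E)
    then show ?thesis
      using abelian_iff_subset_centralizer by blast
  next
    assume "primitive_type3 scale br"
    then obtain B A where "B \<noteq> A" and minimal_ideals: "{B. minimal_ideal scale br B} = {B, A}"
      unfolding primitive_type3_def by (elim conjE exE)
    have "minimal_ideal scale br B" "minimal_ideal scale br A"
      using minimal_ideals by (simp_all add: set_eq_iff)
    then show ?thesis
      using minimal_ideal_subset_centralizer[OF _ _ \<open>B \<noteq> A\<close>] by blast
  qed
  then obtain B A where B: "minimal_ideal scale br B" and A: "minimal_ideal scale br A"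
    and A_C: "A \<subseteq> centralizer br B"
    by blast
  have "A \<noteq> {0}"
    using A by (simp add: minimal_ideal_def)
  then have "common_complement scale br B U"
    using complements_if_core_free[OF U B minimal_ideal_lie_ideal[OF A] _ A_C] B subalg
    by (simp add: common_complement_iff)
  then show ?thesis
    by blast
qed

end

section \<open>A common complement of a minimal ideal and its centralizer\<close>

context common_complement
begin

lemma subspace_U: "subspace U"
  using subalgebra_U by (rule lie_subalgebra_subspace)

lemma decompose_B: "\<exists>b\<in>B. \<exists>u\<in>U. x = b + u"
  using complements_B unfolding complements_def by blast

lemma decompose_C: "\<exists>c\<in>C. \<exists>u\<in>U. x = c + u"
  using complements_C unfolding complements_def by blast

lemma B_Int_U: "B \<inter> U = {0}"
  using complements_B unfolding complements_def by blast

lemma C_Int_U: "C \<inter> U = {0}"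
  using complements_C unfolding complements_def by blast

definition proj where "proj x = (SOME b. b \<in> B \<and> x - b \<in> U)"

lemma proj: "proj x \<in> B" "x - proj x \<in> U"
proof -
  obtain b u where "b \<in> B" "u \<in> U" "x = b + u"
    using decompose_B by blast
  then have "\<exists>b. b \<in> B \<and> x - b \<in> U"
    by force
  then show "proj x \<in> B" "x - proj x \<in> U"
    unfolding proj_def by (metis (mono_tags, lifting) someI_ex)+
qed

lemma proj_unique:
  assumes "b \<in> B" "x - b \<in> U"
  shows "proj x = b"
proof -
  have "proj x - b = (x - b) - (x - proj x)"
    by simp
  also have "\<dots> \<in> U"
    using assms proj subspace_diff[OF subspace_U] by blast
  finally have "proj x - b \<in> B \<inter> U"
    using assms proj subspace_diff[OF subspace_B] by blast
  then show ?thesis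
    using B_Int_U by auto
qed

lemma proj_add: "proj (x + y) = proj x + proj y"
proof (rule proj_unique)
  show "proj x + proj y \<in> B"
    using proj subspace_add[OF subspace_B] by blast
  have "x + y - (proj x + proj y) = (x - proj x) + (y - proj y)"
    by (simp add: algebra_simps)
  then show "x + y - (proj x + proj y) \<in> U"
    using proj subspace_add[OF subspace_U] by metis
qed

lemma proj_scale: "proj (scale a x) = scale a (proj x)"
proof (rule proj_unique)
  show "scale a (proj x) \<in> B"
    using proj subspace_scale[OF subspace_B] by blast
  have "scale a x - scale a (proj x) = scale a (x - proj x)"
    by (simp add: scale_right_diff_distrib)
  then show "scale a x - scale a (proj x) \<in> U"
    using proj subspace_scale[OF subspace_U] by metis
qed

lemma proj_br:
  "proj (br x y) = br (proj x) (proj y) + br (x - proj x) (proj y) - br (y - proj y) (proj x)"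
  (is "_ = ?b")
proof (rule proj_unique)
  show "?b \<in> B"
    using proj lie_ideal_br_left[OF lie_ideal_B] subspace_add[OF subspace_B]
      subspace_diff[OF subspace_B] by metis
  have "br x y = ?b + br (x - proj x) (y - proj y)"
    using br_decompose[of "proj x" "x - proj x" "proj y" "y - proj y"] by simp
  then show "br x y - ?b \<in> U"
    using proj lie_subalgebra_br[OF subalgebra_U] by simp
qed

lemma diff_proj_br: "br x y - proj (br x y) = br (x - proj x) (y - proj y)"
proof -
  have "br x y = proj (br x y) + br (x - proj x) (y - proj y)"
    unfolding proj_br using br_decompose[of "proj x" "x - proj x" "proj y" "y - proj y"] by simp
  then show ?thesis
    by (simp add: algebra_simps)
qed

lemma module_hom_proj: "module_hom scale scale proj"
  by (simp add: module_hom_iff proj_add proj_scale module_axioms)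

lemma diff_mem_U_if_proj_eq:
  assumes "proj x = proj y"
  shows "x - y \<in> U"
proof -
  have "x - y = (x - proj x) - (y - proj y)"
    using assms by simp
  then show ?thesis
    using proj subspace_diff[OF subspace_U] by metis
qed

lemma maximal_subalgebra_U: "maximal_subalgebra scale br U"
  unfolding maximal_subalgebra_def
proof (intro conjI allI impI)
  obtain b where "b \<in> B" "b \<noteq> 0"
    using minimal_B by (rule minimal_ideal_nonzero)
  then show "U \<noteq> UNIV"
    using B_Int_U by blast
  fix V assume V: "lie_subalgebra scale br V \<and> U \<subseteq> V"
  then have subspace_V: "subspace V"
    using lie_subalgebra_subspace by blast
  have proj_V: "proj v \<in> B \<inter> V" if "v \<in> V" for v
  proof -
    have "proj v = v - (v - proj v)"
      by simp
    also have "\<dots> \<in> V"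
      using that proj(2) V subspace_diff[OF subspace_V] by blast
    finally show ?thesis
      using proj(1) by blast
  qed
  have "\<forall>x. \<exists>c\<in>C. \<exists>v\<in>V. x = c + v"
    using decompose_C V by blast
  then have "lie_ideal scale br (B \<inter> V)"
    using V centralizer_br_left by (intro lie_ideal_Int_subalgebra[OF lie_ideal_B]) blast+
  then consider "B \<inter> V = {0}" | "B \<inter> V = B"
    using minimal_B unfolding minimal_ideal_def by blast
  then show "V = U \<or> V = UNIV"
  proof cases
    case 1
    have "v \<in> U" if "v \<in> V" for v
      using proj_V[OF that] proj(2)[of v] 1 by simp
    then have "V \<subseteq> U"
      by blast
    then show ?thesis
      using V by blast
  next
    case 2
    have "x \<in> V" for x
    proof -
      have "proj x \<in> V" "x - proj x \<in> V"
        using 2 V proj by blast+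
      then have "proj x + (x - proj x) \<in> V"
        using subspace_add[OF subspace_V] by blast
      then show ?thesis
        by simp
    qed
    then show ?thesis
      by blast
  qed
qed (fact subalgebra_U)

lemma core_U: "core scale br U = {0}"
  unfolding core_eq_zero_iff
proof (intro allI impI)
  fix I assume I: "lie_ideal scale br I \<and> I \<subseteq> U"
  have "I \<subseteq> C"
    unfolding centralizer_def
  proof (intro subsetI CollectI ballI)
    fix i b assume "i \<in> I" "b \<in> B"
    then have "br i b \<in> B \<inter> U"
      using I lie_ideal_br_right lie_ideal_br_left[OF lie_ideal_B] by blast
    then show "br i b = 0"
      using B_Int_U by blast
  qed
  then show "I = {0}"
    using I C_Int_U subspace_0[OF lie_ideal_subspace] by blast
qed

lemma primitive: "primitive scale br"
  unfolding primitive_def using maximal_subalgebra_U core_U by blast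

lemma centralizer_eq_if_abelian:
  assumes "abelian br B"
  shows "C = B"
proof
  show "B \<subseteq> C"
    using assms by (simp add: abelian_iff_subset_centralizer)
  show "C \<subseteq> B"
  proof
    fix c assume "c \<in> C"
    obtain b u where "b \<in> B" "u \<in> U" and c: "c = b + u"
      using decompose_B by blast
    have "u = c - b"
      using c by simp
    then have "u \<in> C"
      using \<open>c \<in> C\<close> \<open>b \<in> B\<close> \<open>B \<subseteq> C\<close> subspace_diff[OF subspace_C] by blast
    then have "u = 0"
      using C_Int_U \<open>u \<in> U\<close> by blast
    then show "c \<in> B"
      using c \<open>b \<in> B\<close> by simp
  qed
qed

lemma lie_ideal_proj_image:
  assumes J: "lie_ideal scale br J" "J \<subseteq> C"
  shows "lie_ideal scale br (proj ` J)"
proof (rule lie_ideal_if_stable[OF _ allI[OF decompose_C]])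
  show "subspace (proj ` J)"
    using module_hom.subspace_image[OF module_hom_proj] J(1) lie_ideal_subspace by blast
  show "br c w \<in> proj ` J" if "c \<in> C" "w \<in> proj ` J" for c w
  proof -
    have "br c w = proj 0"
      using that proj(1) centralizer_br_left proj_unique[of 0 0] subspace_0[OF subspace_B]
        subspace_0[OF subspace_U] by auto
    then show ?thesis
      using subspace_0[OF lie_ideal_subspace[OF J(1)]] by blast
  qed
  show "br u w \<in> proj ` J" if "u \<in> U" "w \<in> proj ` J" for u w
  proof -
    obtain j where "j \<in> J" "w = proj j"
      using \<open>w \<in> proj ` J\<close> by blast
    moreover have "proj u = 0"
      using proj_unique[of 0 u] \<open>u \<in> U\<close> subspace_0[OF subspace_B] by simp
    ultimately have "br u w = proj (br u j)"
      by (simp add: proj_br)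
    then show ?thesis
      using lie_ideal_br_left[OF J(1) \<open>j \<in> J\<close>] by blast
  qed
qed

lemma minimal_ideal_C: "minimal_ideal scale br C"
  unfolding minimal_ideal_def
proof (intro conjI allI impI)
  obtain b where b: "b \<in> B" "b \<noteq> 0"
    using minimal_B by (rule minimal_ideal_nonzero)
  show "C \<noteq> {0}"
  proof
    assume "C = {0}"
    then have "b \<in> U"
      using decompose_C[of b] by auto
    then show False
      using b B_Int_U by blast
  qed
  fix J assume J: "lie_ideal scale br J \<and> J \<subseteq> C"
  have "proj ` J \<subseteq> B"
    using proj(1) by blast
  then consider "proj ` J = {0}" | "proj ` J = B"
    using minimal_B lie_ideal_proj_image J unfolding minimal_ideal_def by blast
  then show "J = {0} \<or> J = C"
  proof cases
    case 1
    have "j = 0" if "j \<in> J" for j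
    proof -
      have "proj j = 0"
        using 1 that by blast
      then have "j \<in> U"
        using proj(2)[of j] by simp
      then show "j = 0"
        using that J C_Int_U by blast
    qed
    then show ?thesis
      using subspace_0[OF lie_ideal_subspace] J by blast
  next
    case 2
    have "c \<in> J" if "c \<in> C" for c
    proof -
      obtain j where "j \<in> J" "proj c = proj j"
        using 2 proj(1)[of c] by (metis imageE)
      then have "c - j \<in> C \<inter> U"
        using that J diff_mem_U_if_proj_eq subspace_diff[OF subspace_C] by blast
      then show "c \<in> J"
        using C_Int_U \<open>j \<in> J\<close> by auto
    qed
    then show ?thesis
      using J by blast
  qed
qed (fact lie_ideal_C)

lemma abelian_if_abelian_C:
  assumes "abelian br C"
  shows "abelian br B"
  unfolding abelian_def
proof (intro ballI)
  fix b1 b2 assume b: "b1 \<in> B" "b2 \<in> B"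
  obtain c1 u1 where 1: "c1 \<in> C" "u1 \<in> U" "b1 = c1 + u1"
    using decompose_C by blast
  obtain c2 u2 where 2: "c2 \<in> C" "u2 \<in> U" "b2 = c2 + u2"
    using decompose_C by blast
  have "br c1 c2 = 0"
    using assms 1(1) 2(1) unfolding abelian_def by blast
  moreover have "u1 = b1 - c1"
    using 1(3) by simp
  ultimately have "br u1 c2 = 0"
    using centralizer_br_right[OF 2(1) b(1)] by (simp add: br_diff_left)
  then have "br b1 b2 = br u1 u2"
    using 1(3) 2(3) centralizer_br_left[OF 1(1) b(2)] by (simp add: br_add_left br_add_right)
  then have "br b1 b2 \<in> B \<inter> U"
    using lie_ideal_br_left[OF lie_ideal_B b(2), of b1] lie_subalgebra_br[OF subalgebra_U 1(2) 2(2)] by simp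
  then show "br b1 b2 = 0"
    using B_Int_U by blast
qed

lemma minimal_ideal_cases:
  assumes "minimal_ideal scale br B'"
  shows "B' = B \<or> B' = C"
proof (cases "B' = B")
  case False
  then have "B' \<subseteq> C"
    using minimal_ideal_subset_centralizer[OF minimal_B assms] by blast
  moreover have "B' \<noteq> {0}"
    using assms by (simp add: minimal_ideal_def)
  ultimately show ?thesis
    using minimal_ideal_eq_if_subset[OF minimal_ideal_C minimal_ideal_lie_ideal[OF assms]] by blast
qed simp

lemma primitive_type1_or_type3: "primitive_type1 scale br \<or> primitive_type3 scale br"
proof (cases "abelian br B")
  case True
  then have "B' = B" if "minimal_ideal scale br B'" for B'
    using minimal_ideal_cases[OF that] centralizer_eq_if_abelian by auto
  then have "primitive_type1 scale br"
    unfolding primitive_type1_def using primitive minimal_B True by blast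
  then show ?thesis ..
next
  case False
  then have "C \<noteq> B"
    using abelian_iff_subset_centralizer by auto
  moreover have "{B'. minimal_ideal scale br B'} = {B, C}"
    using minimal_ideal_cases minimal_B minimal_ideal_C by blast
  moreover have "\<not> abelian br B'" if "minimal_ideal scale br B'" for B'
    using minimal_ideal_cases[OF that] False abelian_if_abelian_C by blast
  ultimately have "primitive_type3 scale br"
    unfolding primitive_type3_def using primitive by blast
  then show ?thesis ..
qed

definition to_semidirect where "to_semidirect x = (proj x, coset C (x - proj x))"

lemma inj_to_semidirect: "inj to_semidirect"
proof (rule injI)
  fix x y assume "to_semidirect x = to_semidirect y"
  then have "proj x = proj y" and "x - y \<in> C"
    unfolding to_semidirect_def by (auto simp add: coset_eq_iff[OF subspace_C])
  then have "x - y \<in> C \<inter> U"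
    using diff_mem_U_if_proj_eq by blast
  then show "x = y"
    using C_Int_U by auto
qed

lemma range_to_semidirect: "range to_semidirect = B \<times> quot C"
proof
  show "range to_semidirect \<subseteq> B \<times> quot C"
    unfolding to_semidirect_def quot_def using proj by auto
  show "B \<times> quot C \<subseteq> range to_semidirect"
  proof
    fix p assume "p \<in> B \<times> quot C"
    then obtain b z where p: "p = (b, coset C z)" "b \<in> B"
      unfolding quot_def by auto
    obtain c v where cv: "c \<in> C" "v \<in> U" "z = c + v"
      using decompose_C by blast
    have "proj (b + v) = b"
      using proj_unique p cv by simp
    moreover have "coset C v = coset C z"
      using cv subspace_neg[OF subspace_C] by (simp add: coset_eq_iff[OF subspace_C])
    ultimately have "to_semidirect (b + v) = p"
      unfolding to_semidirect_def p by simp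
    then show "p \<in> range to_semidirect"
      by (metis rangeI)
  qed
qed

lemma iso_semidirect: "iso_semidirect scale br B"
  unfolding iso_semidirect_def Let_def
proof (intro exI[of _ to_semidirect] conjI allI)
  show "bij_betw to_semidirect UNIV (B \<times> quot C)"
    unfolding bij_betw_def using inj_to_semidirect range_to_semidirect by blast
  show "to_semidirect (x + y) = sd_add C (to_semidirect x) (to_semidirect y)" for x y
    unfolding to_semidirect_def sd_add_coset[OF subspace_C] by (simp add: proj_add algebra_simps)
  show "to_semidirect (scale a x) = sd_scale scale C a (to_semidirect x)" for a x
    unfolding to_semidirect_def sd_scale_coset[OF subspace_C]
    by (simp add: proj_scale scale_right_diff_distrib)
  show "to_semidirect (br x y) = sd_br br C (to_semidirect x) (to_semidirect y)" for x y
    unfolding to_semidirect_def sd_br_coset[OF lie_ideal_B proj(1) proj(1)] diff_proj_br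
    by (simp add: proj_br)
qed

end

section \<open>Isomorphisms onto the semidirect sum\<close>

locale semidirect_iso = lie_minimal_ideal +
  fixes f
  assumes bij_f: "bij_betw f UNIV (B \<times> quot C)"
    and f_add: "f (x + y) = sd_add C (f x) (f y)"
    and f_scale: "f (scale a x) = sd_scale scale C a (f x)"
    and f_br: "f (br x y) = sd_br br C (f x) (f y)"
begin

definition \<beta> where "\<beta> x = fst (f x)"

definition \<rho> where "\<rho> x = rep (snd (f x))"

lemma f_mem: "f x \<in> B \<times> quot C"
  using bij_f bij_betwE by blast

lemma \<beta>_mem: "\<beta> x \<in> B"
  using f_mem[of x] unfolding \<beta>_def by (simp add: mem_Times_iff)

lemma f_eq: "f x = (\<beta> x, coset C (\<rho> x))"
proof -
  have "snd (f x) \<in> quot C"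
    using f_mem[of x] by (simp add: mem_Times_iff)
  then show ?thesis
    unfolding \<beta>_def \<rho>_def using coset_rep[OF subspace_C] by (metis prod.collapse)
qed

lemma f_surj:
  assumes "b \<in> B"
  obtains x where "\<beta> x = b" "\<rho> x - z \<in> C"
proof -
  have "(b, coset C z) \<in> range f"
    using assms bij_f unfolding bij_betw_def quot_def by auto
  then obtain x where "f x = (b, coset C z)"
    by auto
  then have "\<beta> x = b" "\<rho> x - z \<in> C"
    by (simp_all add: f_eq coset_eq_iff[OF subspace_C])
  then show ?thesis
    by (rule that)
qed

lemma f_inj:
  assumes "\<beta> x = \<beta> y" "\<rho> x - \<rho> y \<in> C"
  shows "x = y"
proof -
  have "f x = f y"
    using assms by (simp add: f_eq coset_eq_iff[OF subspace_C])
  then show ?thesis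
    using bij_f unfolding bij_betw_def inj_def by blast
qed

lemma \<beta>_add: "\<beta> (x + y) = \<beta> x + \<beta> y" and \<rho>_add: "\<rho> (x + y) - (\<rho> x + \<rho> y) \<in> C"
  using f_add[of x y] by (simp_all add: f_eq sd_add_coset subspace_C coset_eq_iff)

lemma \<beta>_scale: "\<beta> (scale a x) = scale a (\<beta> x)" and \<rho>_scale: "\<rho> (scale a x) - scale a (\<rho> x) \<in> C"
  using f_scale[of a x] by (simp_all add: f_eq sd_scale_coset subspace_C coset_eq_iff)

lemma \<beta>_br: "\<beta> (br x y) = br (\<beta> x) (\<beta> y) + br (\<rho> x) (\<beta> y) - br (\<rho> y) (\<beta> x)"
  and \<rho>_br: "\<rho> (br x y) - br (\<rho> x) (\<rho> y) \<in> C"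
  using f_br[of x y]
  by (simp_all add: f_eq sd_br_coset[OF lie_ideal_B \<beta>_mem \<beta>_mem] subspace_C coset_eq_iff)

lemma \<beta>_zero: "\<beta> 0 = 0"
  using \<beta>_add[of 0 0] by simp

lemma \<rho>_zero: "\<rho> 0 \<in> C"
  using \<rho>_scale[of 0 0] by simp

lemma \<beta>_diff: "\<beta> (x - y) = \<beta> x - \<beta> y"
  using \<beta>_add[of "x - y" y] by (simp add: algebra_simps)

lemma module_hom_\<beta>: "module_hom scale scale \<beta>"
  by (simp add: module_hom_iff \<beta>_add \<beta>_scale module_axioms)

text \<open>The preimages of B \<ltimes> 0 and 0 \<ltimes> L/C under f.\<close>

definition B' where "B' = {x. \<rho> x \<in> C}"

definition U' where "U' = {x. \<beta> x = 0}"

lemma lie_subalgebra_U': "lie_subalgebra scale br U'"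
  unfolding lie_subalgebra_def subspace_def U'_def
  by (simp add: \<beta>_zero \<beta>_add \<beta>_scale \<beta>_br)

lemma lie_ideal_B': "lie_ideal scale br B'"
  unfolding lie_ideal_def subspace_def B'_def
proof (intro conjI allI ballI impI; simp)
  show "\<rho> 0 \<in> C"
    by (rule \<rho>_zero)
  show "\<rho> (x + y) \<in> C" if "\<rho> x \<in> C" "\<rho> y \<in> C" for x y
    using that \<rho>_add subspace_add[OF subspace_C] subspace_mem_if_diff_mem[OF subspace_C] by blast
  show "\<rho> (scale a x) \<in> C" if "\<rho> x \<in> C" for a x
    using that \<rho>_scale subspace_scale[OF subspace_C] subspace_mem_if_diff_mem[OF subspace_C] by blast
  show "\<rho> (br x y) \<in> C" if "\<rho> y \<in> C" for x y
    using that \<rho>_br lie_ideal_br_left[OF lie_ideal_C] subspace_mem_if_diff_mem[OF subspace_C] by blast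
qed

lemma B'_Int_U': "B' \<inter> U' = {0}"
proof
  show "B' \<inter> U' \<subseteq> {0}"
  proof
    fix x assume "x \<in> B' \<inter> U'"
    then have "\<beta> x = \<beta> 0" "\<rho> x - \<rho> 0 \<in> C"
      unfolding B'_def U'_def using \<beta>_zero \<rho>_zero subspace_diff[OF subspace_C] by auto
    then show "x \<in> {0}"
      using f_inj by blast
  qed
  show "{0} \<subseteq> B' \<inter> U'"
    unfolding B'_def U'_def using \<beta>_zero \<rho>_zero by simp
qed

lemma decompose_B': "\<exists>b\<in>B'. \<exists>u\<in>U'. x = b + u"
proof -
  obtain y where "\<beta> y = \<beta> x" "\<rho> y - 0 \<in> C"
    using f_surj[OF \<beta>_mem] by blast
  then have "y \<in> B'" "x - y \<in> U'"
    unfolding B'_def U'_def by (simp_all add: \<beta>_diff)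
  then show ?thesis
    by (metis add.commute diff_add_cancel)
qed

lemma \<beta>_br_B':
  assumes "y \<in> B'"
  shows "\<beta> (br x y) = br (\<beta> x + \<rho> x) (\<beta> y)"
proof -
  have "br (\<rho> y) (\<beta> x) = 0"
    using assms centralizer_br_left[OF _ \<beta>_mem] unfolding B'_def by blast
  then show ?thesis
    by (simp add: \<beta>_br br_add_left)
qed

lemma mem_centralizer_B'_iff: "x \<in> centralizer br B' \<longleftrightarrow> \<beta> x + \<rho> x \<in> C"
proof
  assume x: "x \<in> centralizer br B'"
  show "\<beta> x + \<rho> x \<in> C"
    unfolding centralizer_def
  proof (intro CollectI ballI)
    fix b assume "b \<in> B"
    then obtain y where "\<beta> y = b" "\<rho> y - 0 \<in> C"
      using f_surj by blast
    then have "y \<in> B'"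
      unfolding B'_def by simp
    then have "\<beta> (br x y) = 0"
      using x centralizer_br_left \<beta>_zero by metis
    then show "br (\<beta> x + \<rho> x) b = 0"
      using \<beta>_br_B'[OF \<open>y \<in> B'\<close>] \<open>\<beta> y = b\<close> by simp
  qed
next
  assume x: "\<beta> x + \<rho> x \<in> C"
  show "x \<in> centralizer br B'"
    unfolding centralizer_def
  proof (intro CollectI ballI)
    fix y assume "y \<in> B'"
    then have "br x y \<in> B' \<inter> U'"
      using lie_ideal_br_left[OF lie_ideal_B'] \<beta>_br_B' centralizer_br_left[OF x \<beta>_mem]
      unfolding U'_def by simp
    then show "br x y = 0"
      using B'_Int_U' by blast
  qed
qed

lemma complements_centralizer_B': "complements U' (centralizer br B')"
  unfolding complements_def
proof (intro conjI allI)
  fix x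
  obtain d where "\<beta> d = \<beta> x" "\<rho> d - (- \<beta> x) \<in> C"
    using f_surj[OF \<beta>_mem] by blast
  then have "d \<in> centralizer br B'" "x - d \<in> U'"
    unfolding mem_centralizer_B'_iff U'_def by (simp_all add: \<beta>_diff algebra_simps)
  then show "\<exists>d\<in>centralizer br B'. \<exists>u\<in>U'. x = d + u"
    by (metis add.commute diff_add_cancel)
next
  show "centralizer br B' \<inter> U' = {0}"
  proof
    show "centralizer br B' \<inter> U' \<subseteq> {0}"
    proof
      fix x assume "x \<in> centralizer br B' \<inter> U'"
      then have "\<beta> x + \<rho> x \<in> C" "x \<in> U'"
        using mem_centralizer_B'_iff by auto
      then have "x \<in> B' \<inter> U'"
        unfolding B'_def U'_def by simp
      then show "x \<in> {0}"
        using B'_Int_U' by blast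
    qed
    show "{0} \<subseteq> centralizer br B' \<inter> U'"
      using subspace_0[OF subspace_centralizer] lie_subalgebra_U' lie_subalgebra_subspace subspace_0
      by blast
  qed
qed

lemma lie_ideal_image_\<beta>:
  assumes J: "lie_ideal scale br J" "J \<subseteq> B'"
  shows "lie_ideal scale br (\<beta> ` J)"
  unfolding lie_ideal_def
proof (intro conjI allI ballI)
  show "subspace (\<beta> ` J)"
    using module_hom.subspace_image[OF module_hom_\<beta>] J(1) lie_ideal_subspace by blast
  fix z b assume "b \<in> \<beta> ` J"
  then obtain j where j: "j \<in> J" "b = \<beta> j"
    by blast
  obtain x where x: "\<beta> x = 0" "\<rho> x - z \<in> C"
    using f_surj[OF subspace_0[OF subspace_B]] by blast
  have "\<beta> (br x j) = br (\<rho> x) b"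
    using \<beta>_br_B' j J(2) x(1) by auto
  also have "\<dots> = br z b"
    using centralizer_br_left[OF x(2) \<beta>_mem, of j] j(2) by (simp add: br_diff_left)
  finally show "br z b \<in> \<beta> ` J"
    using lie_ideal_br_left[OF J(1) j(1)] by (metis image_eqI)
qed

lemma minimal_ideal_B': "minimal_ideal scale br B'"
  unfolding minimal_ideal_def
proof (intro conjI allI impI)
  obtain b where "b \<in> B" "b \<noteq> 0"
    using minimal_B by (rule minimal_ideal_nonzero)
  moreover obtain x where "\<beta> x = b" "\<rho> x - 0 \<in> C"
    using f_surj[OF \<open>b \<in> B\<close>] by blast
  ultimately have "x \<in> B'" "x \<noteq> 0"
    unfolding B'_def using \<beta>_zero by auto
  then show "B' \<noteq> {0}"
    by blast
  fix J assume J: "lie_ideal scale br J \<and> J \<subseteq> B'"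
  show "J = {0} \<or> J = B'"
  proof (cases "J = {0}")
    case False
    then obtain j where j: "j \<in> J" "j \<noteq> 0"
      using subspace_0[OF lie_ideal_subspace] J by blast
    then have "\<beta> j \<noteq> 0"
      using J B'_Int_U' unfolding U'_def by blast
    then have "\<beta> ` J \<noteq> {0}"
      using j by blast
    then have image: "\<beta> ` J = B"
      using minimal_ideal_eq_if_subset[OF minimal_B lie_ideal_image_\<beta>] J \<beta>_mem by blast
    have "B' \<subseteq> J"
    proof
      fix y assume "y \<in> B'"
      obtain j' where "j' \<in> J" "\<beta> j' = \<beta> y"
        using image \<beta>_mem by (metis imageE)
      moreover have "\<rho> j' - \<rho> y \<in> C"
        using \<open>j' \<in> J\<close> \<open>y \<in> B'\<close> J subspace_diff[OF subspace_C] unfolding B'_def by blast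
      ultimately show "y \<in> J"
        using f_inj by metis
    qed
    then show ?thesis
      using J by blast
  qed simp
qed (fact lie_ideal_B')

lemma complements_B': "complements U' B'"
  unfolding complements_def using decompose_B' B'_Int_U' by blast

lemma common_complement_B'_U': "common_complement scale br B' U'"
  by (simp add: common_complement_iff minimal_ideal_B' lie_subalgebra_U' complements_B'
      complements_centralizer_B')

end

context lie_alg
begin

lemma common_complement_if_iso_semidirect:
  assumes "minimal_ideal scale br B" and "iso_semidirect scale br B"
  shows "\<exists>B U. common_complement scale br B U"
proof -
  obtain f where "bij_betw f UNIV (B \<times> quot (centralizer br B))"
    and "\<And>x y. f (x + y) = sd_add (centralizer br B) (f x) (f y)"
    and "\<And>a x. f (scale a x) = sd_scale scale (centralizer br B) a (f x)"
    and "\<And>x y. f (br x y) = sd_br br (centralizer br B) (f x) (f y)"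
    using assms(2) unfolding iso_semidirect_def Let_def by blast
  then have "semidirect_iso scale br B f"
    using assms(1) lie_alg_axioms
    by (simp add: semidirect_iso_def semidirect_iso_axioms_def lie_minimal_ideal_def
        lie_minimal_ideal_axioms_def)
  then show ?thesis
    using semidirect_iso.common_complement_B'_U' by blast
qed

lemma primitive_type1_or_type3_iff_common_complement:
  "primitive_type1 scale br \<or> primitive_type3 scale br \<longleftrightarrow> (\<exists>B U. common_complement scale br B U)"
proof
  show "\<exists>B U. common_complement scale br B U" if "primitive_type1 scale br \<or> primitive_type3 scale br"
    using that by (rule common_complement_if_primitive_type1_or_type3)
  show "primitive_type1 scale br \<or> primitive_type3 scale br" if "\<exists>B U. common_complement scale br B U"
    using that common_complement.primitive_type1_or_type3 by (elim exE)
qed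

lemma common_complement_iff_iso_semidirect:
  "(\<exists>B U. common_complement scale br B U) \<longleftrightarrow>
   (\<exists>B. minimal_ideal scale br B \<and> iso_semidirect scale br B)"
proof
  show "\<exists>B. minimal_ideal scale br B \<and> iso_semidirect scale br B"
    if "\<exists>B U. common_complement scale br B U"
  proof -
    from that obtain B U where "common_complement scale br B U"
      by (elim exE)
    then interpret common_complement scale br B U .
    show ?thesis
      using minimal_B iso_semidirect by blast
  qed
  show "\<exists>B U. common_complement scale br B U"
    if "\<exists>B. minimal_ideal scale br B \<and> iso_semidirect scale br B"
    using that common_complement_if_iso_semidirect by (elim exE conjE)
qed

end

theorem theorem1p6:
  fixes scale :: "'f::field \<Rightarrow> 'a::ab_group_add \<Rightarrow> 'a"
    and br :: "'a \<Rightarrow> 'a \<Rightarrow> 'a"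
  assumes "lie_algebra scale br"
    and "fin_dim scale"
  shows "((primitive_type1 scale br \<or> primitive_type3 scale br) \<longleftrightarrow>
           (\<exists>B U. minimal_ideal scale br B \<and> lie_subalgebra scale br U \<and>
              complements U B \<and> complements U (centralizer br B)))
       \<and> ((\<exists>B U. minimal_ideal scale br B \<and> lie_subalgebra scale br U \<and>
              complements U B \<and> complements U (centralizer br B)) \<longleftrightarrow>
           (\<exists>B. minimal_ideal scale br B \<and> iso_semidirect scale br B))"
proof -
  interpret lie_alg scale br
    using assms(1) by (rule lie_alg_if_lie_algebra)
  show ?thesis
    using primitive_type1_or_type3_iff_common_complement common_complement_iff_iso_semidirect
    unfolding common_complement_iff by blast
qed

end
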